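(* Let $N$ be a finite set with $n=|N|\geq 2$, and let $\mathcal{D}\subseteq \mathrm{DAG}(N)$ be a facet of the family-variable polytope $P_N$ (in the sense that $\mathrm{conv}\{\eta_G : G\in\mathcal{D}\}$ is a facet of $P_N$). Then the following conditions are equivalent: (a) $\mathcal{D}$ is closed under Markov equivalence, i.e. whenever $G,H\in\mathrm{DAG}(N)$ are Markov equivalent and $G\in\mathcal{D}$, then $H\in\mathcal{D}$; (b) $\mathcal{D}$ contains every full graph over $N$; (c) $\mathcal{D}$ is score equivalent (SE).
   Context: $\mathrm{DAG}(N)$ is the set of acyclic directed graphs with node set $N$; $\mathrm{pa}_G(a)$ denotes the parent set of $a$ in $G$. Two graphs $G,H\in\mathrm{DAG}(N)$ are Markov equivalent ($G\sim H$) if they have the same adjacencies and the same immoralities (induced subgraphs $a\to c\leftarrow b$ with $a,b$ non-adjacent). A full graph is an acyclic directed graph over $N$ in which every pair of distinct nodes is adjacent (all full graphs are Markov equivalent). Let $\Upsilon=\{(a|B): a\in N,\ \emptyset\neq B\subseteq N\setminus\{a\}\}$. For $G\in\mathrm{DAG}(N)$ the family-variable vector $\eta_G\in\mathbb{R}^{\Upsilon}$ has $\eta_G(a|B)=1$ if $B=\mathrm{pa}_G(a)$ and $0$ otherwise. The family-variable polytope is $P_N=\mathrm{conv}\{\eta_G: G\in\mathrm{DAG}(N)\}$. A set $\mathcal{D}\subseteq\mathrm{DAG}(N)$ is called a face (resp. facet) of $P_N$ if $\mathrm{conv}\{\eta_G:G\in\mathcal{D}\}$ is a face (resp. facet, i.e.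 face of dimension $\dim P_N-1$) of $P_N$. A vector $o\in\mathbb{R}^{\Upsilon}$ is an SE (score equivalent) objective if $\langle o,\eta_G\rangle=\langle o,\eta_H\rangle$ whenever $G\sim H$. A face $F$ of $P_N$ is SE if there exist an SE objective $o$ and $u\in\mathbb{R}$ with $P_N\subseteq\{v:\langle o,v\rangle\le u\}$ and $F=\{v\in P_N:\langle o,v\rangle=u\}$; a set of graphs is SE if the corresponding face is SE. *)

theory Defs
  imports "HOL-Analysis.Analysis"
begin

text \<open>Node set N is the (finite) universe of the type 'n. A directed graph is an edge
set; (b,a) in G means the edge b -> a.\<close>

definition DAG :: "('n::finite \<times> 'n) set set" where
  "DAG = {G. acyclic G}"

definition pa :: "('n \<times> 'n) set \<Rightarrow> 'n \<Rightarrow> 'n set" where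
  "pa G a = {b. (b, a) \<in> G}"

definition adj :: "('n \<times> 'n) set \<Rightarrow> 'n \<Rightarrow> 'n \<Rightarrow> bool" where
  "adj G a b \<longleftrightarrow> (a, b) \<in> G \<or> (b, a) \<in> G"

definition immoralities :: "('n \<times> 'n) set \<Rightarrow> ('n \<times> 'n \<times> 'n) set" where
  "immoralities G = {(a, c, b). (a, c) \<in> G \<and> (b, c) \<in> G \<and> a \<noteq> b \<and> \<not> adj G a b}"

definition markov_equiv :: "('n \<times> 'n) set \<Rightarrow> ('n \<times> 'n) set \<Rightarrow> bool" where
  "markov_equiv G H \<longleftrightarrow> (\<forall>a b. adj G a b \<longleftrightarrow> adj H a b) \<and> immoralities G = immoralities H"

definition full_graph :: "('n::finite \<times> 'n) set \<Rightarrow> bool" where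
  "full_graph G \<longleftrightarrow> G \<in> DAG \<and> (\<forall>a b. a \<noteq> b \<longrightarrow> adj G a b)"

text \<open>Index set Upsilon = {(a|B) : B nonempty, B subset of N - {a}}. Vectors in R^Upsilon are
embedded in real^('n \<times> 'n set); coordinates outside Upsilon are zero for all eta_G.\<close>

definition Upsilon :: "('n \<times> 'n set) set" where
  "Upsilon = {(a, B). B \<noteq> {} \<and> a \<notin> B}"

definition eta :: "('n::finite \<times> 'n) set \<Rightarrow> real ^ ('n \<times> 'n set)" where
  "eta G = (\<chi> p. if p \<in> Upsilon \<and> snd p = pa G (fst p) then 1 else 0)"

definition family_polytope :: "(real ^ ('n::finite \<times> 'n set)) set" where
  "family_polytope = convex hull (eta ` DAG)"

definition is_facet :: "('n::finite \<times> 'n) set set \<Rightarrow> bool" where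
  "is_facet D \<longleftrightarrow> D \<subseteq> DAG \<and> (convex hull (eta ` D)) facet_of family_polytope"

definition SE_objective :: "real ^ ('n::finite \<times> 'n set) \<Rightarrow> bool" where
  "SE_objective w \<longleftrightarrow> (\<forall>G\<in>DAG. \<forall>H\<in>DAG. markov_equiv G H \<longrightarrow> w \<bullet> eta G = w \<bullet> eta H)"

definition SE_face :: "(real ^ ('n::finite \<times> 'n set)) set \<Rightarrow> bool" where
  "SE_face F \<longleftrightarrow> F face_of family_polytope \<and>
     (\<exists>w u. SE_objective w \<and> (\<forall>v\<in>family_polytope. w \<bullet> v \<le> u) \<and>
            F = {v \<in> family_polytope. w \<bullet> v = u})"

definition SE_set :: "('n::finite \<times> 'n) set set \<Rightarrow> bool" where
  "SE_set D \<longleftrightarrow> SE_face (convex hull (eta ` D))"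

end

theory Submission
  imports Defs
begin

text \<open>A facet is the set of maximisers of some linear score \<open>w\<close> with maximum \<open>u\<close>. Every
  facet contains a full graph: otherwise each parent set \<open>(a|B)\<close> occurs in the facet (else the
  face \<open>x(a|B) = 0\<close> would lie strictly between facet and polytope), which makes local scores
  monotone in the parent set, so completing a graph of the facet to a full graph keeps it a
  maximiser. As all full graphs are Markov equivalent, (a) implies (b). If all full graphs score
  \<open>u\<close>, comparing full graphs that differ in the position of one node shows that every local score
  is an increment \<open>s (B \<union> {a}) - s B\<close> of one set function \<open>s\<close>; by Moebius inversion the score
  of a DAG is then a linear function of its characteristic imset, a Markov equivalence invariant,
  so (b) implies (c). Finally (c) implies (a) because the facet consists of the maximisers of an
  SE objective.\<close>

section \<open>Scores and family variables\<close>

definition local_score :: "real ^ ('n::finite \<times> 'n set) \<Rightarrow> 'n \<Rightarrow> 'n set \<Rightarrow> real" where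
  "local_score w a B = (if B \<noteq> {} \<and> a \<notin> B then w $ (a, B) else 0)"

definition score :: "real ^ ('n::finite \<times> 'n set) \<Rightarrow> ('n \<times> 'n) set \<Rightarrow> real" where
  "score w G = (\<Sum>a\<in>UNIV. local_score w a (pa G a))"

lemma eta_nth: "eta G $ (a, B) = (if B \<noteq> {} \<and> a \<notin> B \<and> B = pa G a then 1 else 0)"
  by (simp add: eta_def Upsilon_def)

lemma inner_eta_eq_score: "w \<bullet> eta G = score w G"
proof -
  have "w \<bullet> eta G = (\<Sum>p\<in>UNIV \<times> UNIV. w $ p * eta G $ p)"
    by (simp add: inner_vec_def)
  also have "\<dots> = (\<Sum>a\<in>UNIV. \<Sum>B\<in>UNIV. w $ (a, B) * eta G $ (a, B))"
    by (simp add: sum.cartesian_product)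
  also have "\<dots> = (\<Sum>a\<in>UNIV. \<Sum>B\<in>UNIV. if B = pa G a then local_score w a B else 0)"
    by (intro sum.cong) (auto simp: eta_nth local_score_def)
  finally show ?thesis
    by (simp add: score_def)
qed

lemma score_update:
  assumes "\<And>x. x \<noteq> a \<Longrightarrow> pa G' x = pa G x"
  shows "score w G' - score w G = local_score w a (pa G' a) - local_score w a (pa G a)"
proof -
  have "score w H = local_score w a (pa H a) + (\<Sum>x\<in>UNIV - {a}. local_score w x (pa H x))" for H
    unfolding score_def by (rule sum.remove) auto
  moreover have "(\<Sum>x\<in>UNIV - {a}. local_score w x (pa G' x)) = (\<Sum>x\<in>UNIV - {a}. local_score w x (pa G x))"
    using assms by (intro sum.cong) auto
  ultimately show ?thesis
    by simp
qed

lemma DAG_irrefl: "G \<in> DAG \<Longrightarrow> (a, a) \<notin> G"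
  by (auto simp: DAG_def acyclic_def)

lemma not_in_pa_DAG: "G \<in> DAG \<Longrightarrow> a \<notin> pa G a"
  by (simp add: pa_def DAG_irrefl)

lemma DAG_subset: "H \<in> DAG \<Longrightarrow> G \<subseteq> H \<Longrightarrow> G \<in> DAG"
  unfolding DAG_def by (auto intro: acyclic_subset)

lemma inj_on_eta: "inj_on eta DAG"
proof (rule inj_onI)
  fix G H :: "('n::finite \<times> 'n) set"
  assume G: "G \<in> DAG" and H: "H \<in> DAG" and eq: "eta G = eta H"
  have "pa G a = pa H a" for a
    using eq[THEN arg_cong, of "\<lambda>v. v $ (a, pa G a)"] eq[THEN arg_cong, of "\<lambda>v. v $ (a, pa H a)"]
      not_in_pa_DAG[OF G] not_in_pa_DAG[OF H]
    by (auto simp: eta_nth split: if_splits)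
  then show "G = H"
    by (auto simp: pa_def)
qed

lemma zero_one_extreme_point:
  fixes x :: "real ^ 'm"
  assumes "x \<in> S" "\<And>y i. y \<in> S \<Longrightarrow> 0 \<le> y $ i \<and> y $ i \<le> 1" "\<And>i. x $ i = 0 \<or> x $ i = 1"
  shows "x extreme_point_of S"
  unfolding extreme_point_of_def
proof (intro conjI ballI assms(1) notI)
  fix a b assume a: "a \<in> S" and b: "b \<in> S" and x: "x \<in> open_segment a b"
  then obtain u where "a \<noteq> b" "0 < u" "u < 1" "x = (1 - u) *\<^sub>R a + u *\<^sub>R b"
    by (auto simp: in_segment)
  moreover have "a $ i = b $ i" for i
  proof -
    have u: "u \<noteq> 0" "1 - u \<noteq> 0"
      using \<open>0 < u\<close> \<open>u < 1\<close> by simp_all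
    have nonneg: "0 \<le> (1 - u) * a $ i" "0 \<le> u * b $ i"
        "0 \<le> (1 - u) * (1 - a $ i)" "0 \<le> u * (1 - b $ i)"
      using a b assms(2)[of a i] assms(2)[of b i] \<open>0 < u\<close> \<open>u < 1\<close> by simp_all
    have xi: "x $ i = (1 - u) * a $ i + u * b $ i"
      using \<open>x = _\<close> by simp
    then have xi': "1 - x $ i = (1 - u) * (1 - a $ i) + u * (1 - b $ i)"
      by (simp add: algebra_simps)
    from assms(3)[of i] show ?thesis
    proof
      assume "x $ i = 0"
      then have "(1 - u) * a $ i = 0" "u * b $ i = 0"
        using nonneg xi by linarith+
      then show ?thesis
        using u by simp
    next
      assume "x $ i = 1"
      then have "(1 - u) * (1 - a $ i) = 0" "u * (1 - b $ i) = 0"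
        using nonneg xi' by linarith+
      then show ?thesis
        using u by simp
    qed
  qed
  ultimately show False
    by (simp add: vec_eq_iff)
qed

lemma eta_in_convex_hull_iff:
  assumes "G \<in> DAG" "D \<subseteq> DAG"
  shows "eta G \<in> convex hull (eta ` D) \<longleftrightarrow> G \<in> D"
proof
  assume G: "eta G \<in> convex hull (eta ` D)"
  have "convex hull (eta ` D) \<subseteq> {y. \<forall>i. 0 \<le> y $ i \<and> y $ i \<le> 1}"
    by (rule hull_minimal) (auto simp: eta_def convex_def intro!: convex_bound_le add_nonneg_nonneg)
  then have "eta G extreme_point_of convex hull (eta ` D)"
    using G by (intro zero_one_extreme_point) (auto simp: eta_def)
  then have "eta G \<in> eta ` D"
    by (rule extreme_point_of_convex_hull)
  then show "G \<in> D"
    using assms inj_on_eta by (auto dest: inj_onD)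
qed (simp add: hull_inc)

section \<open>Full graphs\<close>

definition leveled_graph :: "('n::finite \<Rightarrow> nat) \<Rightarrow> ('n \<times> 'n) set" where
  "leveled_graph L = inv_image (less_than <*lex*> less_than) (\<lambda>x. (L x, to_nat x))"

lemma pa_leveled_graph:
  "pa (leveled_graph L) x = {y. L y < L x \<or> L y = L x \<and> to_nat y < to_nat x}"
  by (simp add: pa_def leveled_graph_def)

lemma leveled_graph_DAG: "leveled_graph L \<in> DAG"
  unfolding DAG_def leveled_graph_def by (intro CollectI wf_acyclic wf_inv_image wf_lex_prod wf_less_than)

lemma full_graph_leveled_graph: "full_graph (leveled_graph L)"
proof -
  have "adj (leveled_graph L) a b" if "a \<noteq> b" for a b
    using that by (auto simp: adj_def leveled_graph_def) (metis linorder_neqE_nat to_nat_split)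
  then show ?thesis
    by (simp add: full_graph_def leveled_graph_DAG)
qed

lemma DAG_subset_full_graph:
  assumes "G \<in> DAG"
  obtains H where "full_graph H" "G \<subseteq> H"
proof
  define L where "L x = card {y. (y, x) \<in> G\<^sup>+}" for x
  show "G \<subseteq> leveled_graph L"
  proof safe
    fix x y assume xy: "(x, y) \<in> G"
    have "{z. (z, x) \<in> G\<^sup>+} \<subset> {z. (z, y) \<in> G\<^sup>+}"
    proof
      show "{z. (z, x) \<in> G\<^sup>+} \<subseteq> {z. (z, y) \<in> G\<^sup>+}"
        using xy by (auto intro: trancl_into_trancl)
      have "(x, x) \<notin> G\<^sup>+"
        using assms by (simp add: DAG_def acyclic_def)
      then show "{z. (z, x) \<in> G\<^sup>+} \<noteq> {z. (z, y) \<in> G\<^sup>+}"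
        using xy by blast
    qed
    then have "L x < L y"
      unfolding L_def by (intro psubset_card_mono) auto
    then show "(x, y) \<in> leveled_graph L"
      by (simp add: leveled_graph_def)
  qed
qed (rule full_graph_leveled_graph)

lemma full_graphs_markov_equiv:
  assumes "full_graph G" "full_graph H"
  shows "markov_equiv G H"
proof -
  have "adj G a b \<longleftrightarrow> adj H a b" for a b
    using assms DAG_irrefl by (cases "a = b") (auto simp: full_graph_def adj_def)
  moreover have "immoralities G = {}" "immoralities H = {}"
    using assms by (auto simp: full_graph_def immoralities_def)
  ultimately show ?thesis
    by (simp add: markov_equiv_def)
qed

lemma eta_in_family_polytope: "G \<in> DAG \<Longrightarrow> eta G \<in> family_polytope"
  unfolding family_polytope_def by (rule hull_inc) simp

lemma convex_family_polytope: "convex family_polytope"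
  unfolding family_polytope_def by simp

lemma facet_exposed_by_score:
  fixes D :: "('n::finite \<times> 'n) set set"
  assumes "is_facet D"
  obtains w u where "family_polytope \<subseteq> {x. w \<bullet> x \<le> u}"
    "convex hull (eta ` D) = family_polytope \<inter> {x. w \<bullet> x = u}"
    "\<And>G. G \<in> DAG \<Longrightarrow> score w G \<le> u"
    "\<And>G. G \<in> DAG \<Longrightarrow> score w G = u \<longleftrightarrow> G \<in> D"
proof -
  have "polyhedron (family_polytope :: (real ^ ('n \<times> 'n set)) set)"
    unfolding family_polytope_def by (intro polytope_imp_polyhedron polytope_convex_hull) simp
  moreover have "convex hull (eta ` D) face_of family_polytope"
    using assms by (simp add: is_facet_def facet_of_imp_face_of)
  ultimately obtain w u where le: "family_polytope \<subseteq> {x. w \<bullet> x \<le> u}"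
    and eq: "convex hull (eta ` D) = family_polytope \<inter> {x. w \<bullet> x = u}"
    by (metis exposed_face_of_polyhedron exposed_face_of_def)
  show ?thesis
  proof (rule that[OF le eq])
    fix G :: "('n \<times> 'n) set"
    assume G: "G \<in> DAG"
    show "score w G \<le> u"
      using le eta_in_family_polytope[OF G] by (auto simp: inner_eta_eq_score)
    show "score w G = u \<longleftrightarrow> G \<in> D"
      using eq eta_in_family_polytope[OF G] eta_in_convex_hull_iff[OF G, of D] assms
      by (simp add: is_facet_def inner_eta_eq_score)
  qed
qed

section \<open>Score equivalence\<close>

text \<open>For \<open>card T \<ge> 2\<close>, \<open>family_count G T\<close> is the value at \<open>T\<close> of the characteristic
  imset of \<open>G\<close> (Studeny, Hemmecke and Lindner), a known Markov equivalence invariant.\<close>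

definition family_count :: "('n \<times> 'n) set \<Rightarrow> 'n set \<Rightarrow> nat" where
  "family_count G T = card {a \<in> T. T \<subseteq> insert a (pa G a)}"

lemma DAG_sink_exists:
  assumes "H \<in> DAG" "x \<in> (T :: 'n::finite set)"
  obtains i where "i \<in> T" "\<And>y. y \<in> T \<Longrightarrow> (i, y) \<notin> H"
proof -
  have "wf (H\<inverse>)"
    using assms(1) by (intro finite_acyclic_wf_converse) (auto simp: DAG_def)
  then show ?thesis
    using that assms(2) by (metis converse_iff wfE_min)
qed

lemma family_markov_equiv:
  assumes G: "G \<in> DAG" and H: "H \<in> DAG" and GH: "markov_equiv G H"
    and "\<exists>x\<in>T. T \<subseteq> insert x (pa G x)"
  shows "\<exists>i\<in>T. T \<subseteq> insert i (pa H i)"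
proof -
  obtain x where x: "x \<in> T" "T \<subseteq> insert x (pa G x)"
    using assms(4) by blast
  obtain i where i: "i \<in> T" and sink: "\<And>y. y \<in> T \<Longrightarrow> (i, y) \<notin> H"
    using DAG_sink_exists[OF H x(1)] by blast
  text \<open>Two non-adjacent parents of \<open>x\<close> would form an immorality at \<open>x\<close>, which \<open>H\<close> shares;
    but the sink \<open>i\<close> of \<open>T\<close> in \<open>H\<close> cannot be one of them.\<close>
  have "adj G i j" if j: "j \<in> T" "j \<noteq> i" for j
  proof (rule ccontr)
    assume nadj: "\<not> adj G i j"
    then have "i \<noteq> x" "j \<noteq> x"
      using x i j by (auto simp: adj_def pa_def)
    then have "(i, x, j) \<in> immoralities G"
      using nadj x i j by (auto simp: immoralities_def pa_def)
    then have "(i, x, j) \<in> immoralities H"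
      using GH by (simp add: markov_equiv_def)
    then have "(i, x) \<in> H"
      by (simp add: immoralities_def)
    then show False
      using sink x by blast
  qed
  then have "T \<subseteq> insert i (pa H i)"
    using GH sink by (auto simp: markov_equiv_def adj_def pa_def)
  with i show ?thesis
    by blast
qed

lemma card_family_sinks_le_1:
  assumes G: "G \<in> DAG"
  shows "card {c \<in> T. T \<subseteq> insert c (pa G c)} \<le> 1"
proof -
  have "x = y" if "x \<in> T" "T \<subseteq> insert x (pa G x)" "y \<in> T" "T \<subseteq> insert y (pa G y)" for x y
  proof (rule ccontr)
    assume "x \<noteq> y"
    then have "(x, y) \<in> G" "(y, x) \<in> G"
      using that by (auto simp: pa_def)
    then have "(x, x) \<in> G\<^sup>+"
      by (rule trancl_into_trancl[OF r_into_trancl])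
    then show False
      using G by (simp add: DAG_def acyclic_def)
  qed
  then show ?thesis
    by (simp add: card_le_Suc0_iff_eq)
qed

lemma family_count_markov_equiv:
  assumes G: "G \<in> DAG" and H: "H \<in> DAG" and GH: "markov_equiv G H"
  shows "family_count G T = family_count H T"
proof -
  have "family_count K T = (if \<exists>a\<in>T. T \<subseteq> insert a (pa K a) then 1 else 0)" if "K \<in> DAG" for K
    using card_family_sinks_le_1[OF that, of T] card_gt_0_iff[of "{a \<in> T. T \<subseteq> insert a (pa K a)}"]
    by (auto simp: family_count_def)
  moreover have "markov_equiv H G"
    using GH by (simp add: markov_equiv_def)
  ultimately show ?thesis
    using family_markov_equiv[OF G H GH] family_markov_equiv[OF H G] G H by metis
qed

definition moebius_transform :: "('a set \<Rightarrow> 'b::ring_1) \<Rightarrow> 'a set \<Rightarrow> 'b" where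
  "moebius_transform s T = (-1) ^ card T * (\<Sum>U\<in>Pow T. (-1) ^ card U * s U)"

lemma sum_moebius_transform: "finite S \<Longrightarrow> s S = (\<Sum>T\<in>Pow S. moebius_transform s T)"
  unfolding moebius_transform_def by (rule inclusion_exclusion_symmetric) simp_all

lemma score_eq_sum_family_count:
  assumes incr: "\<And>a P. a \<notin> P \<Longrightarrow> local_score w a P = s (insert a P) - s P"
    and G: "G \<in> DAG"
  shows "score w G = (\<Sum>T\<in>UNIV. moebius_transform s T * family_count G T)"
proof -
  have "local_score w a (pa G a) = (\<Sum>T\<in>{T. a \<in> T \<and> T \<subseteq> insert a (pa G a)}. moebius_transform s T)" for a
  proof -
    have "local_score w a (pa G a) = s (insert a (pa G a)) - s (pa G a)"
      using incr[OF not_in_pa_DAG[OF G]] .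
    also have "\<dots> = (\<Sum>T\<in>Pow (insert a (pa G a)). moebius_transform s T) - (\<Sum>T\<in>Pow (pa G a). moebius_transform s T)"
      by (intro arg_cong2[where f = "(-)"] sum_moebius_transform finite)
    also have "\<dots> = (\<Sum>T\<in>Pow (insert a (pa G a)) - Pow (pa G a). moebius_transform s T)"
      by (rule sum_diff[symmetric]) auto
    also have "Pow (insert a (pa G a)) - Pow (pa G a) = {T. a \<in> T \<and> T \<subseteq> insert a (pa G a)}"
      using not_in_pa_DAG[OF G] by auto
    finally show ?thesis .
  qed
  then have "score w G = (\<Sum>a\<in>UNIV. \<Sum>T\<in>{T\<in>UNIV. a \<in> T \<and> T \<subseteq> insert a (pa G a)}. moebius_transform s T)"
    by (simp add: score_def)
  also have "\<dots> = (\<Sum>T\<in>UNIV. \<Sum>a\<in>{a\<in>UNIV. a \<in> T \<and> T \<subseteq> insert a (pa G a)}. moebius_transform s T)"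
    by (rule sum.swap_restrict) simp_all
  finally show ?thesis
    by (simp add: family_count_def mult.commute)
qed

lemma SE_objective_if_score_increments:
  fixes w :: "real ^ ('n::finite \<times> 'n set)"
  assumes "\<And>a P. a \<notin> P \<Longrightarrow> local_score w a P = s (insert a P) - s P"
  shows "SE_objective w"
proof (unfold SE_objective_def, intro ballI impI)
  fix G H :: "('n \<times> 'n) set"
  assume "G \<in> DAG" "H \<in> DAG" "markov_equiv G H"
  then show "w \<bullet> eta G = w \<bullet> eta H"
    by (simp add: inner_eta_eq_score score_eq_sum_family_count[OF assms] family_count_markov_equiv)
qed

definition ordered_score :: "real ^ ('n::finite \<times> 'n set) \<Rightarrow> 'n set \<Rightarrow> real" where
  "ordered_score w T = (\<Sum>x\<in>T. local_score w x {y \<in> T. to_nat y < to_nat x})"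

lemma score_leveled_graph:
  assumes "\<And>x. L x = 0 \<longleftrightarrow> x \<in> S"
  shows "score w (leveled_graph L)
    = ordered_score w S + (\<Sum>x\<in>-S. local_score w x (pa (leveled_graph L) x))"
proof -
  have "score w (leveled_graph L)
      = (\<Sum>x\<in>S. local_score w x (pa (leveled_graph L) x)) + (\<Sum>x\<in>-S. local_score w x (pa (leveled_graph L) x))"
    unfolding score_def by (metis Compl_eq_Diff_UNIV add.commute finite subset_UNIV sum.subset_diff)
  moreover have "(\<Sum>x\<in>S. local_score w x (pa (leveled_graph L) x)) = ordered_score w S"
    unfolding ordered_score_def using assms
    by (intro sum.cong refl arg_cong[where f = "local_score w _"]) (auto simp: pa_leveled_graph simp flip: assms)
  ultimately show ?thesis
    by simp
qed

text \<open>Moving \<open>a\<close> from just behind \<open>T\<close> into the ordered block of \<open>T\<close> changes no parent set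
  except that of \<open>a\<close>, so comparing the two full graphs isolates \<open>local_score w a T\<close>.\<close>

lemma score_increment_if_full_graphs_tight:
  assumes tight: "\<And>G. full_graph G \<Longrightarrow> score w G = u" and "a \<notin> T"
  shows "local_score w a T = ordered_score w (insert a T) - ordered_score w T"
proof -
  define L1 where "L1 x = (if x \<in> T then 0 else if x = a then 1 else 2::nat)" for x
  define L2 where "L2 x = (if x \<in> insert a T then 0 else 2::nat)" for x
  define R where "R = (\<Sum>x\<in>-insert a T. local_score w x {y. y \<in> insert a T \<or> to_nat y < to_nat x})"
  have rest: "(\<Sum>x\<in>-insert a T. local_score w x (pa (leveled_graph L) x)) = R"
    if "\<And>x. L x \<le> 2" "\<And>x. L x = 2 \<longleftrightarrow> x \<notin> insert a T" for L
  proof -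
    have lt2: "L y < 2 \<longleftrightarrow> y \<in> insert a T" and eq2: "y \<notin> insert a T \<Longrightarrow> L y = 2" for y
      using that[of y] by linarith+
    have "pa (leveled_graph L) x = {y. y \<in> insert a T \<or> to_nat y < to_nat x}"
      if "x \<notin> insert a T" for x
      using eq2[OF that] by (auto simp: pa_leveled_graph lt2 eq2)
    then show ?thesis
      unfolding R_def by (intro sum.cong refl arg_cong[where f = "local_score w _"]) simp
  qed
  have "u = score w (leveled_graph L1)"
    by (rule tight[OF full_graph_leveled_graph, symmetric])
  also have "\<dots> = ordered_score w T + (\<Sum>x\<in>-T. local_score w x (pa (leveled_graph L1) x))"
    by (rule score_leveled_graph) (simp add: L1_def)
  also have "-T = insert a (-insert a T)"
    using \<open>a \<notin> T\<close> by auto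
  also have "(\<Sum>x\<in>insert a (-insert a T). local_score w x (pa (leveled_graph L1) x))
      = local_score w a (pa (leveled_graph L1) a) + R"
    using rest[of L1] by (simp add: L1_def)
  also have "pa (leveled_graph L1) a = T"
    using \<open>a \<notin> T\<close> by (auto simp: pa_leveled_graph L1_def)
  finally have "u = ordered_score w T + (local_score w a T + R)" .
  moreover have "u = score w (leveled_graph L2)"
    by (rule tight[OF full_graph_leveled_graph, symmetric])
  also have "\<dots> = ordered_score w (insert a T) + R"
    using score_leveled_graph[of L2 "insert a T" w] rest[of L2] by (simp add: L2_def)
  ultimately show ?thesis
    by simp
qed

lemma SE_objective_if_full_graphs_tight:
  fixes w :: "real ^ ('n::finite \<times> 'n set)"
  assumes "\<And>G. full_graph G \<Longrightarrow> score w G = u"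
  shows "SE_objective w"
  by (rule SE_objective_if_score_increments[where s = "ordered_score w"])
    (rule score_increment_if_full_graphs_tight[OF assms])

section \<open>Facets\<close>

text \<open>Otherwise the facet lies in the face \<open>{x. x $ (a, B) = 0}\<close>, which \<open>eta K\<close>
  and the graph with edge set \<open>B \<times> {a}\<close> show to lie strictly between the facet and the
  polytope.\<close>

lemma facet_realizes_parent_set:
  fixes D :: "('n::finite \<times> 'n) set set"
  assumes facet: "is_facet D" and aB: "(a, B) \<in> Upsilon"
    and K: "K \<in> DAG" "K \<notin> D" "pa K a \<noteq> B"
  shows "\<exists>G\<in>D. pa G a = B"
proof (rule ccontr)
  assume not_realized: "\<not> (\<exists>G\<in>D. pa G a = B)"
  let ?P = "family_polytope :: (real ^ ('n \<times> 'n set)) set"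
  let ?F = "convex hull (eta ` D)"
  have DAG: "D \<subseteq> DAG" and "?F facet_of ?P"
    using facet by (auto simp: is_facet_def)
  then have F: "?F face_of ?P" "aff_dim ?F = aff_dim ?P - 1"
    by (auto simp: facet_of_def)
  define Phi where "Phi = ?P \<inter> {x. axis (a, B) 1 \<bullet> x = 0}"
  have coord: "axis (a, B) 1 \<bullet> x = x $ (a, B)" for x :: "real ^ ('n \<times> 'n set)"
    by (simp add: cart_eq_inner_axis inner_commute)
  have "?P \<subseteq> {x. axis (a, B) 1 \<bullet> x \<ge> 0}"
    unfolding family_polytope_def
    by (intro hull_minimal convex_halfspace_ge) (auto simp: coord eta_def)
  then have Phi: "Phi face_of ?P"
    unfolding Phi_def by (intro face_of_Int_supporting_hyperplane_ge convex_family_polytope) auto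
  have "?F \<subseteq> {x. axis (a, B) 1 \<bullet> x = 0}"
    using not_realized by (intro hull_minimal convex_hyperplane) (auto simp: coord eta_nth)
  then have "?F \<subseteq> Phi"
    unfolding Phi_def using F(1) face_of_imp_subset by blast
  then have F_Phi: "?F face_of Phi"
    using F(1) Phi face_of_subset face_of_imp_subset by blast
  have "eta K \<in> Phi" "eta K \<notin> ?F"
    using K aB eta_in_family_polytope eta_in_convex_hull_iff[OF K(1) DAG]
    by (auto simp: Phi_def coord eta_nth)
  then have "aff_dim ?F < aff_dim Phi"
    using face_of_aff_dim_lt[OF face_of_imp_convex[OF Phi] F_Phi] by blast
  define E where "E = B \<times> {a}"
  have "b \<in> pa (leveled_graph (\<lambda>x. if x = a then 1 else 0)) a" if "b \<in> B" for b
    using that aB by (auto simp: pa_leveled_graph Upsilon_def)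
  then have "E \<subseteq> leveled_graph (\<lambda>x. if x = a then 1 else 0)"
    by (auto simp: E_def pa_def)
  then have "E \<in> DAG"
    by (rule DAG_subset[OF leveled_graph_DAG])
  moreover have "pa E a = B"
    by (auto simp: E_def pa_def)
  ultimately have "eta E \<in> ?P - Phi"
    using aB by (auto simp: Phi_def coord eta_nth eta_in_family_polytope Upsilon_def)
  then have "aff_dim Phi < aff_dim ?P"
    using face_of_aff_dim_lt[OF convex_family_polytope Phi] by blast
  with \<open>aff_dim ?F < aff_dim Phi\<close> F(2) show False
    by linarith
qed

lemma local_score_mono_if_parent_sets_realized:
  assumes le: "\<And>G. G \<in> DAG \<Longrightarrow> score w G \<le> u"
    and on_facet: "\<And>G. G \<in> D \<Longrightarrow> score w G = u"
    and realized: "\<And>a B. (a, B) \<in> Upsilon \<Longrightarrow> \<exists>G\<in>D. pa G a = B"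
    and DAG: "D \<subseteq> DAG"
    and "B' \<subseteq> B" "a \<notin> B"
  shows "local_score w a B' \<le> local_score w a B"
proof (cases "B = {}")
  case False
  then have "(a, B) \<in> Upsilon"
    using \<open>a \<notin> B\<close> by (simp add: Upsilon_def)
  then obtain G where G: "G \<in> D" "pa G a = B"
    using realized by blast
  define G' where "G' = G - (- B') \<times> {a}"
  have "G' \<in> DAG"
    using G DAG by (rule_tac DAG_subset[of G]) (auto simp: G'_def)
  then have "score w G' \<le> score w G"
    using le[of G'] on_facet[OF G(1)] by linarith
  moreover have "pa G' a = B'"
    using G \<open>B' \<subseteq> B\<close> by (auto simp: G'_def pa_def)
  moreover have "score w G' - score w G = local_score w a (pa G' a) - local_score w a (pa G a)"
    by (rule score_update) (auto simp: G'_def pa_def)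
  ultimately show ?thesis
    using G(2) by simp
qed (use \<open>B' \<subseteq> B\<close> in simp)

lemma facet_contains_full_graph:
  fixes D :: "('n::finite \<times> 'n) set set"
  assumes facet: "is_facet D"
  shows "\<exists>K\<in>D. full_graph K"
proof (rule ccontr)
  assume no_full: "\<not> (\<exists>K\<in>D. full_graph K)"
  have DAG: "D \<subseteq> DAG"
    using facet by (simp add: is_facet_def)
  obtain w u where "family_polytope \<subseteq> {x. w \<bullet> x \<le> u}"
    "convex hull (eta ` D) = family_polytope \<inter> {x. w \<bullet> x = u}"
    and le: "\<And>G. G \<in> DAG \<Longrightarrow> score w G \<le> u"
    and tight: "\<And>G. G \<in> DAG \<Longrightarrow> score w G = u \<longleftrightarrow> G \<in> D"
    using facet_exposed_by_score[OF facet] by blast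
  have on_facet: "\<And>G. G \<in> D \<Longrightarrow> score w G = u"
    using tight DAG by auto
  text \<open>A full graph in which \<open>a\<close> is a source is outside \<open>D\<close> and has \<open>pa K a = {}\<close>.\<close>
  have realized: "\<exists>G\<in>D. pa G a = B" if "(a, B) \<in> Upsilon" for a B
  proof (rule facet_realizes_parent_set[OF facet that])
    let ?K = "leveled_graph (\<lambda>x. if x = a then 0 else 1)"
    show "?K \<in> DAG"
      by (rule leveled_graph_DAG)
    show "?K \<notin> D"
      using full_graph_leveled_graph no_full by blast
    show "pa ?K a \<noteq> B"
      using that by (auto simp: pa_leveled_graph Upsilon_def)
  qed
  have mono: "local_score w a B' \<le> local_score w a B" if "B' \<subseteq> B" "a \<notin> B" for a B B'
    by (rule local_score_mono_if_parent_sets_realized[OF le on_facet realized DAG that])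
  have "convex hull (eta ` D) \<noteq> {}"
    using facet by (simp add: is_facet_def facet_of_def)
  then obtain G where G: "G \<in> D"
    by auto
  then obtain H where H: "full_graph H" "G \<subseteq> H"
    using DAG DAG_subset_full_graph by blast
  then have "H \<in> DAG"
    by (simp add: full_graph_def)
  have "score w G \<le> score w H"
    unfolding score_def using H(2) not_in_pa_DAG[OF \<open>H \<in> DAG\<close>]
    by (intro sum_mono mono) (auto simp: pa_def)
  moreover have "score w G = u"
    using on_facet G by blast
  ultimately have "score w H = u"
    using le[OF \<open>H \<in> DAG\<close>] by linarith
  then have "H \<in> D"
    using tight[OF \<open>H \<in> DAG\<close>] by simp
  with H(1) no_full show False
    by blast
qed

lemma all_full_graphs_in_facet_if_markov_closed:
  assumes "is_facet D"
    and "\<forall>G\<in>DAG. \<forall>H\<in>DAG. markov_equiv G H \<and> G \<in> D \<longrightarrow> H \<in> D"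
    and "full_graph G"
  shows "G \<in> D"
  using assms facet_contains_full_graph[OF assms(1)] full_graphs_markov_equiv
  by (auto simp: full_graph_def)

lemma SE_set_if_all_full_graphs_in_facet:
  fixes D :: "('n::finite \<times> 'n) set set"
  assumes facet: "is_facet D" and full: "\<forall>G. full_graph G \<longrightarrow> G \<in> D"
  shows "SE_set D"
proof -
  obtain w u where "family_polytope \<subseteq> {x. w \<bullet> x \<le> u}"
    and "convex hull (eta ` D) = family_polytope \<inter> {x. w \<bullet> x = u}"
    and "\<And>G. G \<in> DAG \<Longrightarrow> score w G \<le> u"
    and "\<And>G. G \<in> DAG \<Longrightarrow> score w G = u \<longleftrightarrow> G \<in> D"
    using facet_exposed_by_score[OF facet] by blast
  moreover from this have "SE_objective w"
    using full by (intro SE_objective_if_full_graphs_tight[of w u]) (simp add: full_graph_def)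
  moreover have "convex hull (eta ` D) face_of family_polytope"
    using facet by (simp add: is_facet_def facet_of_imp_face_of)
  ultimately show ?thesis
    unfolding SE_set_def SE_face_def by blast
qed

lemma markov_closed_if_SE_set:
  assumes facet: "is_facet D" and SE: "SE_set D"
    and G: "G \<in> DAG" and H: "H \<in> DAG" and GH: "markov_equiv G H" and "G \<in> D"
  shows "H \<in> D"
proof -
  have DAG: "D \<subseteq> DAG"
    using facet by (simp add: is_facet_def)
  obtain w u where "SE_objective w"
    and F: "convex hull (eta ` D) = {v \<in> family_polytope. w \<bullet> v = u}"
    using SE unfolding SE_set_def SE_face_def by blast
  then have "w \<bullet> eta H = w \<bullet> eta G"
    using G H GH by (simp add: SE_objective_def)
  also have "w \<bullet> eta G = u"
    using F eta_in_convex_hull_iff[OF G DAG] \<open>G \<in> D\<close> by blast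
  finally show ?thesis
    using F eta_in_convex_hull_iff[OF H DAG] eta_in_family_polytope[OF H] by blast
qed

theorem theorem1:
  fixes D :: "('n::finite \<times> 'n) set set"
  assumes "CARD('n) \<ge> 2"
    and "is_facet D"
  shows "((\<forall>G\<in>DAG. \<forall>H\<in>DAG. markov_equiv G H \<and> G \<in> D \<longrightarrow> H \<in> D)
          \<longleftrightarrow> (\<forall>G. full_graph G \<longrightarrow> G \<in> D))
       \<and> ((\<forall>G. full_graph G \<longrightarrow> G \<in> D) \<longleftrightarrow> SE_set D)"
  using all_full_graphs_in_facet_if_markov_closed[OF assms(2)]
    SE_set_if_all_full_graphs_in_facet[OF assms(2)] markov_closed_if_SE_set[OF assms(2)]
  by blast

end
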